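(* Let $B_n^{(m)}(x)$ denote the generalized Bernoulli polynomials of order $m$, defined by $\dfrac{z^me^{xz}}{(e^z-1)^m}=\sum_{n\ge0}B_n^{(m)}(x)\dfrac{z^n}{n!}$ for $|z|<2\pi$. (1) For every positive integer $m$, $$\frac{z^m}{\sin^m z}=\sum_{n=0}^\infty\frac{(-1)^n4^nB_{2n}^{(m)}(m/2)}{(2n)!}z^{2n},\qquad |z|<\pi.$$ (2) For every positive even integer $m$, $$\sum_{k=0}^m\binom mk B_k^{(m+1)}\Bigl(\frac{m+1}2\Bigr)2^k=0.$$ *)

theory Defs
  imports "HOL-Analysis.Analysis" "HOL-Computational_Algebra.Formal_Power_Series"
begin

text \<open>We take the coefficient in the ring of formal power series, which is the
  Taylor expansion of this function (analytic for |z| < 2 pi).\<close>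
definition gen_bernoulli :: "nat \<Rightarrow> nat \<Rightarrow> real \<Rightarrow> real" where
  "gen_bernoulli m n x =
     fact n * fps_nth ((fps_X / (fps_exp 1 - 1)) ^ m * fps_exp x) n"

end

theory Submission
  imports Defs "HOL-Complex_Analysis.Complex_Analysis"
begin

text \<open>Let G = X / (e^X - 1). Since G(-X) = G(X) e^X, the substitution X \<mapsto> -X sends
  G^m e^(cX) to G^m e^((m - c)X); at c = m/2 the series is even, so the odd-index B_n^(m)(m/2)
  vanish. Putting w = 2iz into the generating function gives (w / (e^w - 1))^m e^(mw/2) =
  (z / sin z)^m, which is (1).
  For (2), the Appell property turns the sum into 2^m B_m^(m+1)(m/2 + 1). With P = G^m e^(mX/2)
  and F = G^(m+1) e^((m/2+1)X), the relation X G' = G - G^2 e^X gives X P' = m P - m F + (m/2) X P;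
  comparing coefficients of X^m leaves m F_m = (m/2) P_(m-1), an odd coefficient of P.\<close>

definition bernoulli_fps :: "'a::field_char_0 fps" where
  "bernoulli_fps = fps_X / (fps_exp 1 - 1)"

lemma gen_bernoulli_conv_bernoulli_fps:
  "gen_bernoulli m n x = fact n * fps_nth (bernoulli_fps ^ m * fps_exp x) n"
  unfolding gen_bernoulli_def bernoulli_fps_def ..

lemma fps_exp_minus_1_nonzero:
  assumes "c \<noteq> 0"
  shows "fps_exp (c::'a::field_char_0) - 1 \<noteq> 0"
proof
  assume "fps_exp c - 1 = 0"
  hence "fps_nth (fps_exp c - 1) 1 = 0" by simp
  with assms show False by simp
qed

lemma subdegree_fps_exp_minus_1:
  assumes "c \<noteq> 0"
  shows "subdegree (fps_exp (c::'a::field_char_0) - 1) = 1"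
  using assms by (intro subdegreeI) auto

lemma bernoulli_fps_times_fps_exp_minus_1:
  "bernoulli_fps * (fps_exp 1 - 1) = (fps_X :: 'a::field_char_0 fps)"
proof -
  have "subdegree (fps_exp (1::'a) - 1) \<le> subdegree (fps_X :: 'a fps)"
    using subdegree_fps_exp_minus_1[of "1::'a"] by simp
  thus ?thesis
    unfolding bernoulli_fps_def by (intro fps_times_divide_eq fps_exp_minus_1_nonzero one_neq_zero)
qed

lemma bernoulli_fps_compose_uminus:
  "bernoulli_fps oo (- fps_X) = (bernoulli_fps :: 'a::field_char_0 fps) * fps_exp 1"
proof -
  have "(bernoulli_fps oo - fps_X) * (fps_exp (-1::'a) - 1)
          = (bernoulli_fps * (fps_exp 1 - 1)) oo - fps_X"
    by (simp add: fps_compose_mult_distrib fps_compose_sub_distrib)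
  also have "\<dots> = - fps_X"
    by (simp add: bernoulli_fps_times_fps_exp_minus_1)
  also have "\<dots> = - (bernoulli_fps * (fps_exp 1 - 1))"
    by (simp add: bernoulli_fps_times_fps_exp_minus_1)
  also have "\<dots> = (bernoulli_fps * fps_exp 1) * (fps_exp (-1) - 1)"
    using fps_exp_add_mult[of "1::'a" "-1"] by (simp add: algebra_simps)
  finally show ?thesis
    using fps_exp_minus_1_nonzero[of "-1::'a"] by (simp add: mult_right_cancel)
qed

lemma bernoulli_fps_power_exp_compose_uminus:
  "(bernoulli_fps ^ m * fps_exp x) oo (- fps_X)
     = (bernoulli_fps :: 'a::field_char_0 fps) ^ m * fps_exp (of_nat m - x)"
proof -
  have "(bernoulli_fps ^ m * fps_exp x) oo (- fps_X)
          = (bernoulli_fps * fps_exp 1) ^ m * (fps_exp (- x) :: 'a fps)"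
    by (simp add: fps_compose_mult_distrib fps_compose_power[symmetric]
                  bernoulli_fps_compose_uminus)
  also have "\<dots> = bernoulli_fps ^ m * fps_exp (of_nat m - x)"
    by (simp add: power_mult_distrib fps_exp_power_mult fps_exp_add_mult[symmetric])
  finally show ?thesis .
qed

lemma bernoulli_fps_power_exp_half_nth_odd:
  assumes "odd n"
  shows "fps_nth ((bernoulli_fps :: 'a::field_char_0 fps) ^ m * fps_exp (of_nat m / 2)) n = 0"
proof -
  let ?P = "(bernoulli_fps :: 'a fps) ^ m * fps_exp (of_nat m / 2)"
  have "(-1) ^ n * fps_nth ?P n = fps_nth (?P oo - fps_X) n"
    by (simp add: fps_compose_uminus')
  also have "\<dots> = fps_nth ?P n"
    by (simp add: bernoulli_fps_power_exp_compose_uminus)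
  finally show ?thesis
    using assms by simp
qed

lemma gen_bernoulli_odd_half_order_eq_0:
  "odd n \<Longrightarrow> gen_bernoulli m n (real m / 2) = 0"
  by (simp add: gen_bernoulli_conv_bernoulli_fps bernoulli_fps_power_exp_half_nth_odd)

lemma fps_X_times_deriv_bernoulli_fps:
  "fps_X * fps_deriv bernoulli_fps
     = bernoulli_fps - bernoulli_fps ^ 2 * fps_exp (1::'a::field_char_0)"
proof -
  let ?G = "bernoulli_fps :: 'a fps"
  have "?G * fps_exp 1 + fps_deriv ?G * (fps_exp 1 - 1) = 1"
    using arg_cong[OF bernoulli_fps_times_fps_exp_minus_1, of fps_deriv] by simp
  hence "fps_deriv ?G * (fps_exp 1 - 1) = 1 - ?G * fps_exp 1"
    by (metis add_diff_cancel_left')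
  hence "(fps_X * fps_deriv ?G) * (fps_exp 1 - 1) = fps_X * (1 - ?G * fps_exp 1)"
    by (metis mult.assoc)
  also have "\<dots> = fps_X - (?G * fps_exp 1) * fps_X"
    by (simp add: right_diff_distrib mult.commute)
  also have "\<dots> = (?G - ?G ^ 2 * fps_exp 1) * (fps_exp 1 - 1)"
    unfolding bernoulli_fps_times_fps_exp_minus_1[symmetric]
    by (simp add: power2_eq_square algebra_simps)
  finally show ?thesis
    using fps_exp_minus_1_nonzero[of "1::'a"] by (simp add: mult_right_cancel)
qed

lemma bernoulli_fps_power_Suc_exp_nth_self:
  assumes "m > 0" "even m"
  shows "fps_nth ((bernoulli_fps :: 'a::field_char_0 fps) ^ Suc m * fps_exp (of_nat m / 2 + 1)) m = 0"
proof -
  define c :: 'a where "c = of_nat m / 2"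
  define P where "P = bernoulli_fps ^ m * fps_exp c"
  define F where "F = bernoulli_fps ^ Suc m * fps_exp (c + 1)"
  obtain k where k: "m = Suc k" using assms(1) by (cases m) auto
  have "fps_X * fps_deriv P
          = fps_const (of_nat m) * (fps_X * fps_deriv bernoulli_fps) * bernoulli_fps ^ k * fps_exp c
            + fps_const c * (fps_X * P)"
    unfolding P_def fps_deriv_mult fps_exp_deriv k fps_deriv_power
    by (simp add: algebra_simps)
  also have "\<dots> = fps_const (of_nat m) * P - fps_const (of_nat m) * F + fps_const c * (fps_X * P)"
    unfolding fps_X_times_deriv_bernoulli_fps P_def F_def k
    by (simp add: fps_exp_add_mult power2_eq_square algebra_simps)
  finally have "fps_nth (fps_X * fps_deriv P) m
      = fps_nth (fps_const (of_nat m) * P - fps_const (of_nat m) * F + fps_const c * (fps_X * P)) m"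
    by (rule arg_cong)
  hence "of_nat m * fps_nth F m = c * fps_nth P k"
    using k by simp
  moreover have "fps_nth P k = 0"
    unfolding P_def c_def using assms k by (intro bernoulli_fps_power_exp_half_nth_odd) auto
  ultimately show ?thesis
    using assms(1) unfolding F_def c_def by simp
qed

lemma gen_bernoulli_add:
  "gen_bernoulli m n (x + y)
     = (\<Sum>k = 0..n. real (n choose k) * gen_bernoulli m k x * y ^ (n - k))"
proof -
  let ?A = "bernoulli_fps ^ m * fps_exp x"
  have "bernoulli_fps ^ m * fps_exp (x + y) = ?A * fps_exp y"
    by (simp add: fps_exp_add_mult mult.assoc)
  hence "gen_bernoulli m n (x + y)
           = fact n * (\<Sum>k = 0..n. fps_nth ?A k * fps_nth (fps_exp y) (n - k))"
    by (simp only: gen_bernoulli_conv_bernoulli_fps fps_mult_nth)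
  also have "\<dots> = (\<Sum>k = 0..n. real (n choose k) * gen_bernoulli m k x * y ^ (n - k))"
    by (auto simp: sum_distrib_left gen_bernoulli_conv_bernoulli_fps binomial_fact
             intro!: sum.cong)
  finally show ?thesis .
qed

lemma gen_bernoulli_Suc_self_eq_0:
  "m > 0 \<Longrightarrow> even m \<Longrightarrow> gen_bernoulli (Suc m) m (real m / 2 + 1) = 0"
  using bernoulli_fps_power_Suc_exp_nth_self[of m, where 'a = real]
  by (simp add: gen_bernoulli_conv_bernoulli_fps)

lemma gen_bernoulli_binomial_sum_eq_0:
  assumes "m > 0" "even m"
  shows "(\<Sum>k = 0..m. real (m choose k) * gen_bernoulli (m + 1) k (real (m + 1) / 2) * 2 ^ k) = 0"
proof -
  let ?x = "real (m + 1) / 2"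
  have "(\<Sum>k = 0..m. real (m choose k) * gen_bernoulli (m + 1) k ?x * 2 ^ k)
          = 2 ^ m * (\<Sum>k = 0..m. real (m choose k) * gen_bernoulli (m + 1) k ?x * (1/2) ^ (m - k))"
    by (auto simp: sum_distrib_left power_one_over power_diff
             intro!: sum.cong)
  also have "\<dots> = 2 ^ m * gen_bernoulli (m + 1) m (?x + 1 / 2)"
    by (simp only: gen_bernoulli_add)
  also have "\<dots> = 0"
    using gen_bernoulli_Suc_self_eq_0[OF assms] by (simp add: field_simps)
  finally show ?thesis .
qed

definition fps_of_real :: "real fps \<Rightarrow> 'a::real_algebra_1 fps" where
  "fps_of_real F = Abs_fps (\<lambda>n. of_real (fps_nth F n))"

lemma fps_nth_fps_of_real [simp]: "fps_nth (fps_of_real F) n = of_real (fps_nth F n)"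
  by (simp add: fps_of_real_def)

lemma fps_of_real_1 [simp]: "fps_of_real 1 = 1"
  by (simp add: fps_eq_iff)

lemma fps_of_real_diff: "fps_of_real (F - G) = fps_of_real F - fps_of_real G"
  by (simp add: fps_eq_iff)

lemma fps_of_real_mult: "fps_of_real (F * G) = fps_of_real F * fps_of_real G"
  by (simp add: fps_eq_iff fps_mult_nth)

lemma fps_of_real_power: "fps_of_real (F ^ n) = fps_of_real F ^ n"
  by (induction n) (simp_all add: fps_of_real_mult)

lemma fps_of_real_exp: "fps_of_real (fps_exp x) = (fps_exp (of_real x) :: 'a::real_field fps)"
  by (simp add: fps_eq_iff)

lemma fps_of_real_bernoulli_fps: "fps_of_real bernoulli_fps = (bernoulli_fps :: 'a::real_field fps)"
proof -
  have "fps_of_real bernoulli_fps * (fps_exp 1 - 1 :: 'a fps)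
          = fps_of_real (bernoulli_fps * (fps_exp 1 - 1) :: real fps)"
    by (simp only: fps_of_real_mult fps_of_real_diff fps_of_real_exp fps_of_real_1 of_real_1)
  also have "\<dots> = bernoulli_fps * (fps_exp 1 - 1 :: 'a fps)"
    by (simp add: bernoulli_fps_times_fps_exp_minus_1 fps_eq_iff)
  finally show ?thesis
    using fps_exp_minus_1_nonzero[of "1::'a"] by (simp add: mult_right_cancel)
qed

lemma fps_of_real_bernoulli_fps_power_exp:
  "fps_of_real (bernoulli_fps ^ m * fps_exp x)
     = (bernoulli_fps ^ m * fps_exp (of_real x) :: 'a::real_field fps)"
  by (simp add: fps_of_real_mult fps_of_real_power fps_of_real_exp fps_of_real_bernoulli_fps)

lemma has_fps_expansion_bernoulli_fps:
  "(\<lambda>w::complex. if w = 0 then 1 else w / (exp w - 1)) has_fps_expansion bernoulli_fps"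
  unfolding bernoulli_fps_def
proof (rule has_fps_expansion_divide)
  show "(\<lambda>w::complex. exp w - 1) has_fps_expansion fps_exp 1 - 1"
    by (intro has_fps_expansion_diff has_fps_expansion_exp1 has_fps_expansion_1)
  show "subdegree (fps_exp (1::complex) - 1) \<le> subdegree (fps_X :: complex fps)"
    using subdegree_fps_exp_minus_1[of "1::complex"] by simp
  show "(1::complex) = fps_nth fps_X (subdegree (fps_exp (1::complex) - 1))
                        / fps_nth (fps_exp 1 - 1) (subdegree (fps_exp (1::complex) - 1))"
    using subdegree_fps_exp_minus_1[of "1::complex"] by simp
qed (auto intro: has_fps_expansion_fps_X fps_exp_minus_1_nonzero)

lemma complex_exp_eq_1_imp_zero:
  fixes w :: complex
  assumes "exp w = 1" "norm w < 2 * pi"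
  shows "w = 0"
proof -
  obtain n :: int where re: "Re w = 0" and im: "Im w = of_int (2 * n) * pi"
    using assms(1) by (auto simp: exp_eq_1)
  have "norm w = 2 * \<bar>of_int n\<bar> * pi"
    using re im by (simp add: cmod_def abs_mult)
  hence "n = 0"
    using assms(2) by simp
  with re im show ?thesis
    by (simp add: complex_eq_iff)
qed

lemma holomorphic_bernoulli_generating_function:
  "(\<lambda>w::complex. if w = 0 then 1 else w / (exp w - 1)) holomorphic_on ball 0 (2 * pi)"
  (is "?h holomorphic_on _")
proof (rule no_isolated_singularity'[where K = "{0}"])
  show "(?h \<longlongrightarrow> ?h z) (at z within ball 0 (2 * pi))" if "z \<in> {0}" for z
    using has_fps_expansion_imp_continuous[OF has_fps_expansion_bernoulli_fps] that
    by (simp add: continuous_within)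
  have "(\<lambda>w. w / (exp w - 1)) holomorphic_on ball 0 (2 * pi) - {0}"
    by (intro holomorphic_intros) (auto dest: complex_exp_eq_1_imp_zero)
  thus "?h holomorphic_on ball 0 (2 * pi) - {0}"
    by (rule holomorphic_transform) auto
qed auto

lemma gen_bernoulli_generating_function:
  fixes w :: complex
  assumes "w \<noteq> 0" "norm w < 2 * pi"
  shows "(\<lambda>n. of_real (gen_bernoulli m n x / fact n) * w ^ n)
           sums (w ^ m * exp (of_real x * w) / (exp w - 1) ^ m)"
proof -
  define g where
    "g v = (if v = 0 then 1 else v / (exp v - 1)) ^ m * exp (of_real x * v)" for v :: complex
  have expansion: "g has_fps_expansion bernoulli_fps ^ m * fps_exp (of_real x)"
    unfolding g_def
    by (intro has_fps_expansion_mult has_fps_expansion_power has_fps_expansion_exp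
              has_fps_expansion_bernoulli_fps)
  have "g holomorphic_on ball 0 (2 * pi)"
    unfolding g_def by (intro holomorphic_intros holomorphic_bernoulli_generating_function)
  hence "(\<lambda>n. fps_nth (bernoulli_fps ^ m * fps_exp (of_real x)) n * w ^ n) sums g w"
    using has_fps_expansion_imp_sums_complex[OF expansion, of "ereal (2 * pi)"] assms(2)
    by simp
  moreover have "fps_nth (bernoulli_fps ^ m * fps_exp (of_real x)) n
                   = (of_real (gen_bernoulli m n x / fact n) :: complex)" for n
    unfolding fps_of_real_bernoulli_fps_power_exp[symmetric] fps_nth_fps_of_real
    by (simp add: gen_bernoulli_conv_bernoulli_fps)
  ultimately show ?thesis
    using assms(1) by (simp add: g_def power_divide)
qed

lemma exp_2i_minus_1: "exp (2 * \<i> * z) - 1 = 2 * \<i> * exp (\<i> * z) * sin z"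
proof -
  have "2 * \<i> * exp (\<i> * z) * sin z = exp (\<i> * z) * (exp (\<i> * z) - exp (- (\<i> * z)))"
    by (simp add: sin_exp_eq mult_ac)
  also have "\<dots> = exp (\<i> * z + \<i> * z) - exp (\<i> * z + - (\<i> * z))"
    by (simp only: exp_add right_diff_distrib)
  also have "\<dots> = exp (2 * \<i> * z) - 1"
    by (simp add: mult_2[symmetric] mult.assoc)
  finally show ?thesis ..
qed

lemma sums_power_div_sin_power:
  fixes z :: complex
  assumes "z \<noteq> 0" "norm z < pi"
  shows "(\<lambda>n. complex_of_real ((-1) ^ n * 4 ^ n * gen_bernoulli m (2 * n) (real m / 2)
                        / fact (2 * n)) * z ^ (2 * n)) sums (z ^ m / (sin z) ^ m)"
proof -
  define w where "w = 2 * \<i> * z"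
  define a where "a n = of_real (gen_bernoulli m n (real m / 2) / fact n) * w ^ n" for n
  have "a sums (w ^ m * exp (of_real (real m / 2) * w) / (exp w - 1) ^ m)"
    unfolding a_def using assms
    by (intro gen_bernoulli_generating_function) (simp_all add: w_def norm_mult)
  also have "of_real (real m / 2) * w = of_nat m * (\<i> * z)"
    by (simp add: w_def)
  also have "w ^ m * exp (of_nat m * (\<i> * z)) / (exp w - 1) ^ m = (w * exp (\<i> * z) / (exp w - 1)) ^ m"
    by (simp only: exp_of_nat_mult power_divide power_mult_distrib)
  also have "w * exp (\<i> * z) / (exp w - 1) = z / sin z"
    by (simp add: w_def exp_2i_minus_1)
  finally have "a sums (z ^ m / sin z ^ m)"
    by (simp only: power_divide)
  moreover have "a n = 0" if "n \<notin> range (\<lambda>k. 2 * k)" for n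
  proof -
    from that have "odd n"
      by (metis evenE rangeI)
    thus ?thesis
      by (simp add: a_def gen_bernoulli_odd_half_order_eq_0)
  qed
  ultimately have "(\<lambda>n. a (2 * n)) sums (z ^ m / sin z ^ m)"
    by (subst sums_mono_reindex) (auto simp: strict_mono_def)
  moreover have "a (2 * n) = complex_of_real ((-1) ^ n * 4 ^ n * gen_bernoulli m (2 * n) (real m / 2)
                                / fact (2 * n)) * z ^ (2 * n)" for n
  proof -
    have "w ^ 2 = (-1) * (4 * z ^ 2)"
      by (simp add: w_def power_mult_distrib)
    hence "w ^ (2 * n) = (-1) ^ n * (4 ^ n * z ^ (2 * n))"
      by (simp only: power_mult power_mult_distrib)
    thus ?thesis
      unfolding a_def by simp
  qed
  ultimately show ?thesis
    by (simp only:)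
qed

theorem lemma3:
  shows "(\<forall>m::nat. m > 0 \<longrightarrow>
            (\<forall>z::complex. z \<noteq> 0 \<and> norm z < pi \<longrightarrow>
               (\<lambda>n. complex_of_real ((-1) ^ n * 4 ^ n * gen_bernoulli m (2 * n) (real m / 2)
                        / fact (2 * n)) * z ^ (2 * n))
               sums (z ^ m / (sin z) ^ m)))
       \<and> (\<forall>m::nat. m > 0 \<and> even m \<longrightarrow>
            (\<Sum>k = 0..m. real (m choose k) * gen_bernoulli (m + 1) k (real (m + 1) / 2) * 2 ^ k) = 0)"
  using sums_power_div_sin_power gen_bernoulli_binomial_sum_eq_0 by blast

end
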